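(* Let $\Gamma$ be a connected, undirected graph without loops on $n\ge 2$ nodes, with adjacency matrix $\mathbf A$, degree matrix $\mathbf K=\mathrm{diag}\{k_i\}$ and Laplacian $\mathbf L=\mathbf K-\mathbf A$. Let $$\mathbf G=\begin{bmatrix}\mathbf 0 & \mathbf I\\ -\mathbf I & -\mathbf L\end{bmatrix}\in\mathbb R^{2n\times 2n},$$ and let $\mathbf U=\mathbf G(\mathbf G^{T}\mathbf G)^{-1/2}$ be the orthogonal factor of the polar decomposition $\mathbf G=\mathbf U\mathbf P$, $\mathbf P=(\mathbf G^T\mathbf G)^{1/2}$. For any initial condition $\mathbf y_0=(\mathbf x_0,\mathbf v_0)\in\mathbb R^{2n}$ define $$\tilde{\mathbf y}(t)=\frac1n\begin{pmatrix}\cos t\,\mathbf 1\mathbf x_0+\sin t\,\mathbf 1\mathbf v_0\\ -\sin t\,\mathbf 1\mathbf x_0+\cos t\,\mathbf 1\mathbf v_0\end{pmatrix},$$ where $\mathbf 1$ is the $n\times n$ matrix of all ones. Then both $e^{\mathbf G t}\mathbf y_0$ and $e^{\mathbf U t}\mathbf y_0$ have the same asymptotic behavior $\tilde{\mathbf y}(t)$ as $t\to+\infty$, i.e. $e^{\mathbf G t}\mathbf y_0-\tilde{\mathbf y}(t)\to \mathbf 0$ and $e^{\mathbf U t}\mathbf y_0-\tilde{\mathbf y}(t)\to\mathbf 0$ as $t\to+\infty$.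
   Context: $\mathbf G^T\mathbf G$ is symmetric positive definite, so $(\mathbf G^T\mathbf G)^{\pm1/2}$ denote its positive definite square root and its inverse. $\mathbf I$ and $\mathbf 0$ are the $n\times n$ identity and zero matrices. The system $\dot{\mathbf y}=\mathbf G\mathbf y$ models $n$ identical unit-mass harmonic oscillators coupled by dampers along the edges of $\Gamma$. *)

theory Defs
  imports "HOL-Analysis.Analysis"
begin

definition adj_matrix :: "('n::finite \<Rightarrow> 'n \<Rightarrow> bool) \<Rightarrow> real^'n^'n" where
  "adj_matrix E = (\<chi> i j. if E i j then 1 else 0)"

definition degree_matrix :: "('n::finite \<Rightarrow> 'n \<Rightarrow> bool) \<Rightarrow> real^'n^'n" where
  "degree_matrix E = (\<chi> i j. if i = j then real (card {k. E i k}) else 0)"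

definition laplacian :: "('n::finite \<Rightarrow> 'n \<Rightarrow> bool) \<Rightarrow> real^'n^'n" where
  "laplacian E = degree_matrix E - adj_matrix E"

text \<open>The 2n x 2n block matrix G = [[0, I], [-I, -L]], indices Inl = position block, Inr = velocity block.\<close>

definition block_G :: "real^'n^'n \<Rightarrow> real^('n::finite + 'n)^('n + 'n)" where
  "block_G L = (\<chi> a b. case (a, b) of
       (Inl i, Inl j) \<Rightarrow> 0
     | (Inl i, Inr j) \<Rightarrow> (if i = j then 1 else 0)
     | (Inr i, Inl j) \<Rightarrow> (if i = j then -1 else 0)
     | (Inr i, Inr j) \<Rightarrow> - (L $ i $ j))"

primrec mat_pow :: "real^'n^'n \<Rightarrow> nat \<Rightarrow> real^'n^'n" where
  "mat_pow M 0 = mat 1"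
| "mat_pow M (Suc k) = M ** mat_pow M k"

definition mat_exp :: "real^'n::finite^'n \<Rightarrow> real^'n^'n" where
  "mat_exp M = (\<Sum>k. (1 / fact k) *\<^sub>R mat_pow M k)"

definition pos_def_matrix :: "real^'n::finite^'n \<Rightarrow> bool" where
  "pos_def_matrix P \<longleftrightarrow> transpose P = P \<and> (\<forall>x. x \<noteq> 0 \<longrightarrow> 0 < x \<bullet> (P *v x))"

definition mat_sqrt :: "real^'n::finite^'n \<Rightarrow> real^'n^'n" where
  "mat_sqrt M = (THE P. pos_def_matrix P \<and> P ** P = M)"

definition polar_U :: "real^'n::finite^'n \<Rightarrow> real^'n^'n" where
  "polar_U G = G ** matrix_inv (mat_sqrt (transpose G ** G))"

definition y_tilde :: "real^('n::finite + 'n) \<Rightarrow> real \<Rightarrow> real^('n + 'n)" where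
  "y_tilde y0 t = (let sx = (\<Sum>i\<in>UNIV. y0 $ Inl i); sv = (\<Sum>i\<in>UNIV. y0 $ Inr i);
                       n = real CARD('n) in
     (\<chi> a. case a of
        Inl i \<Rightarrow> (cos t * sx + sin t * sv) / n
      | Inr i \<Rightarrow> (- sin t * sx + cos t * sv) / n))"

end

(*
  Let b range over an orthonormal eigenbasis of the Laplacian L, with eigenvalues l >= 0.
  Every matrix assembled blockwise from functions of L (G, G^T G, its square root P, P^-1 and
  U = G P^-1) maps the plane of states (a b, c b) of the mode b into itself by a 2x2 matrix
  depending only on l: G by [[0, 1], [-1, -l]] and U by [[-l, 2], [-2, -l]] / sqrt (l^2 + 4).
  Both blocks have determinant 1. For l = 0 they generate the rotation
  (a, c) |-> (cos t a + sin t c, - sin t a + cos t c); for l > 0 their trace -p is negative, so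
  both roots of z^2 + p z + 1 have negative real part and the exponential of the block decays.
  As the graph is connected, l = 0 exactly on the constant vectors, and projecting onto them
  averages the initial positions and velocities, which yields y~(t).
*)

theory Submission
  imports Defs
begin

section \<open>Matrix exponential\<close>

lemma matrix_vector_mult_sum: "M *v (\<Sum>b\<in>S. f b) = (\<Sum>b\<in>S. M *v f b)"
  by (induction S rule: infinite_finite_induct) (simp_all add: matrix_vector_right_distrib)

lemma mat_pow_scaleR: "mat_pow (t *\<^sub>R M) k = t ^ k *\<^sub>R mat_pow M k"
  by (induction k) (simp_all add: matrix_scalar_ac scalar_matrix_assoc[symmetric])

lemma bounded_linear_matrix_mult_left: "bounded_linear (\<lambda>X::real^'n::finite^'m::finite. M ** X)"
  by (rule linear_conv_bounded_linear[THEN iffD1], rule linearI)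
    (simp_all add: matrix_add_ldistrib matrix_scalar_ac scalar_matrix_assoc)

lemma bounded_linear_matrix_vector_mult_left: "bounded_linear (\<lambda>A::real^'n::finite^'m::finite. A *v z)"
  by (rule linear_conv_bounded_linear[THEN iffD1], rule linearI)
    (simp_all add: matrix_vector_mult_add_rdistrib vec_eq_iff matrix_vector_mult_def
      sum_distrib_left sum.distrib distrib_right mult.assoc)

lemma norm_mat_pow_le:
  fixes M :: "real^'n::finite^'n"
  obtains K where "\<And>k. norm (mat_pow M k) \<le> norm (mat 1 :: real^'n^'n) * K ^ k"
proof -
  obtain K where K: "K > 0" "\<And>X::real^'n^'n. norm (M ** X) \<le> norm X * K"
    using bounded_linear.pos_bounded[OF bounded_linear_matrix_mult_left[of M]] by blast
  have "norm (mat_pow M k) \<le> norm (mat 1 :: real^'n^'n) * K ^ k" for k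
  proof (induction k)
    case (Suc k)
    have "norm (mat_pow M (Suc k)) \<le> norm (mat_pow M k) * K" using K(2) by simp
    also have "\<dots> \<le> norm (mat 1 :: real^'n^'n) * K ^ k * K"
      using Suc K(1) by (intro mult_right_mono) auto
    finally show ?case by (simp add: mult_ac)
  qed simp
  then show ?thesis by (rule that)
qed

lemma summable_mat_exp: "summable (\<lambda>k. (1 / fact k) *\<^sub>R mat_pow (M::real^'n::finite^'n) k)"
proof -
  obtain K where K: "\<And>k. norm (mat_pow M k) \<le> norm (mat 1 :: real^'n^'n) * K ^ k"
    using norm_mat_pow_le[of M] by blast
  have bound: "norm ((1 / fact k) *\<^sub>R mat_pow M k) \<le> norm (mat 1 :: real^'n^'n) * (inverse (fact k) * K ^ k)"
    for k using divide_right_mono[OF K[of k], of "fact k"] by (simp add: field_simps)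
  show ?thesis
    by (rule summable_comparison_test'[OF summable_mult[OF summable_exp] bound])
qed

lemma mat_exp_mult_vector_sums:
  "(\<lambda>k. (t ^ k / fact k) *\<^sub>R (mat_pow M k *v z)) sums (mat_exp (t *\<^sub>R M) *v z)"
proof -
  have "(\<lambda>k. (1 / fact k) *\<^sub>R mat_pow (t *\<^sub>R M) k) sums mat_exp (t *\<^sub>R M)"
    unfolding mat_exp_def by (rule summable_sums[OF summable_mat_exp])
  from bounded_linear.sums[OF bounded_linear_matrix_vector_mult_left this, of z]
  show ?thesis by (simp add: mat_pow_scaleR scaleR_matrix_vector_assoc)
qed

section \<open>Second-order linear recurrences and their exponential generating functions\<close>

fun osc_seq :: "real \<Rightarrow> real \<Rightarrow> real \<Rightarrow> nat \<Rightarrow> real" where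
  "osc_seq p a c 0 = a"
| "osc_seq p a c (Suc 0) = c"
| "osc_seq p a c (Suc (Suc k)) = - osc_seq p a c k - p * osc_seq p a c (Suc k)"

lemma osc_seq_Suc: "osc_seq p a c (Suc k) = osc_seq p c (- a - p * c) k"
  by (induction p a c k rule: osc_seq.induct) simp_all

lemma osc_seq_linear: "osc_seq p a c k = a * osc_seq p 1 0 k + c * osc_seq p 0 1 k"
  by (induction p a c k rule: osc_seq.induct) (simp_all add: algebra_simps)

lemma mat_pow_mult_vector_osc_seq:
  assumes "M *v (M *v w) + p *\<^sub>R (M *v w) + w = 0"
  shows "mat_pow M k *v w = osc_seq p 1 0 k *\<^sub>R w + osc_seq p 0 1 k *\<^sub>R (M *v w)"
proof (induction k)
  case (Suc k)
  have "M *v (M *v w) = (M *v (M *v w) + p *\<^sub>R (M *v w) + w) - p *\<^sub>R (M *v w) - w"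
    by (simp add: algebra_simps)
  with assms have MMw: "M *v (M *v w) = - p *\<^sub>R (M *v w) - w" by simp
  have "mat_pow M (Suc k) *v w = M *v (mat_pow M k *v w)"
    by (simp add: matrix_vector_mul_assoc)
  also have "\<dots> = - osc_seq p 0 1 k *\<^sub>R w + (osc_seq p 1 0 k - p * osc_seq p 0 1 k) *\<^sub>R (M *v w)"
    unfolding Suc by (simp add: matrix_vector_right_distrib matrix_vector_mult_scaleR MMw algebra_simps)
  also have "\<dots> = osc_seq p 1 0 (Suc k) *\<^sub>R w + osc_seq p 0 1 (Suc k) *\<^sub>R (M *v w)"
    by (simp add: osc_seq_Suc osc_seq_linear[of p 0 "-1"] osc_seq_linear[of p 1 "-p"])
  finally show ?case .
qed simp

lemma mat_exp_mult_vector_osc_seq: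
  assumes "M *v (M *v w) + p *\<^sub>R (M *v w) + w = 0"
    and "(\<lambda>k. t ^ k / fact k * osc_seq p 1 0 k) sums f"
    and "(\<lambda>k. t ^ k / fact k * osc_seq p 0 1 k) sums g"
  shows "mat_exp (t *\<^sub>R M) *v w = f *\<^sub>R w + g *\<^sub>R (M *v w)"
proof -
  have "(\<lambda>k. (t ^ k / fact k) *\<^sub>R (mat_pow M k *v w)) sums (f *\<^sub>R w + g *\<^sub>R (M *v w))"
    unfolding mat_pow_mult_vector_osc_seq[OF assms(1)]
    using sums_add[OF sums_scaleR_left[OF assms(2)] sums_scaleR_left[OF assms(3)]]
    by (simp add: scaleR_add_right)
  then show ?thesis using mat_exp_mult_vector_sums sums_unique2 by blast
qed

lemma osc_seq_zero: "osc_seq 0 a c k = fact k * (a * cos_coeff k + c * sin_coeff k)"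
proof (induction "0::real" a c k rule: osc_seq.induct)
  case (3 a c k)
  have "fact (Suc (Suc k)) * cos_coeff (Suc (Suc k)) = - (fact k * cos_coeff k)"
    and "fact (Suc (Suc k)) * sin_coeff (Suc (Suc k)) = - (fact k * sin_coeff k)"
    by (simp_all add: cos_coeff_Suc sin_coeff_Suc)
  with 3 show ?case by (simp add: algebra_simps del: fact_Suc)
qed (simp_all add: cos_coeff_def sin_coeff_def)

lemma osc_seq_zero_egf: "(\<lambda>k. t ^ k / fact k * osc_seq 0 a c k) sums (a * cos t + c * sin t)"
proof -
  have "(\<lambda>k. a * (cos_coeff k *\<^sub>R t ^ k) + c * (sin_coeff k *\<^sub>R t ^ k)) sums (a * cos t + c * sin t)"
    by (intro sums_add sums_mult cos_converges sin_converges)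
  then show ?thesis by (simp add: osc_seq_zero algebra_simps)
qed

lemma complex_exp_egf: "(\<lambda>k. of_real (t ^ k / fact k) * m ^ k) sums exp (of_real t * m :: complex)"
  using exp_converges[of "of_real t * m"]
  by (simp add: scaleR_conv_of_real power_mult_distrib divide_inverse mult_ac)

lemma tendsto_exp_mult_at_top_zero:
  assumes "Re m < 0"
  shows "((\<lambda>t. exp (of_real t * m :: complex)) \<longlongrightarrow> 0) at_top"
proof -
  have "filterlim (\<lambda>t. t * Re m) at_bot at_top"
    using filterlim_tendsto_neg_mult_at_bot[OF tendsto_const assms filterlim_ident]
    by (simp add: mult.commute)
  from filterlim_compose[OF exp_at_bot this] show ?thesis
    by (subst tendsto_norm_zero_iff[symmetric]) simp
qed

lemma quadratic_root_Re_neg: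
  assumes "m ^ 2 + of_real p * m + 1 = 0" and "p > 0"
  shows "Re m < 0"
proof -
  have re: "(Re m)^2 - (Im m)^2 + p * Re m + 1 = 0" and im: "(2 * Re m + p) * Im m = 0"
    using arg_cong[OF assms(1), of Re] arg_cong[OF assms(1), of Im]
    by (simp_all add: power2_eq_square algebra_simps)
  show ?thesis
  proof (cases "Im m = 0")
    case True
    with re have "Re m * (Re m + p) = - 1" by (simp add: power2_eq_square algebra_simps)
    moreover have "0 \<le> Re m * (Re m + p)" if "0 \<le> Re m" using that assms(2) by simp
    ultimately show ?thesis by force
  next
    case False
    with im have "2 * Re m + p = 0" by simp
    with assms(2) show ?thesis by simp
  qed
qed

lemma quadratic_root_power_Suc_Suc:
  fixes m :: "'a::comm_ring_1"
  assumes "m ^ 2 + p * m + 1 = 0"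
  shows "m ^ Suc (Suc k) = - p * m ^ Suc k - m ^ k"
proof -
  have root: "m ^ 2 = - (p * m + 1)"
    using assms by (subst eq_neg_iff_add_eq_0) (simp only: add.assoc)
  have "m ^ Suc (Suc k) = m ^ k * m ^ 2" by (simp add: power2_eq_square mult_ac)
  also have "\<dots> = - p * m ^ Suc k - m ^ k" unfolding root by (simp add: algebra_simps)
  finally show ?thesis .
qed

lemma osc_seq_distinct_roots:
  fixes m1 m2 :: complex
  assumes "m1 ^ 2 + of_real p * m1 + 1 = 0" and "m2 ^ 2 + of_real p * m2 + 1 = 0"
  shows "(m1 - m2) * of_real (osc_seq p a c k) =
    (of_real c - m2 * of_real a) * m1 ^ k - (of_real c - m1 * of_real a) * m2 ^ k"
  using assms
proof (induction p a c k rule: osc_seq.induct)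
  case (3 p a c k)
  have "(m1 - m2) * of_real (osc_seq p a c (Suc (Suc k))) =
      - of_real p * ((m1 - m2) * of_real (osc_seq p a c (Suc k))) - (m1 - m2) * of_real (osc_seq p a c k)"
    by (simp add: algebra_simps)
  also have "\<dots> = (of_real c - m2 * of_real a) * m1 ^ Suc (Suc k) - (of_real c - m1 * of_real a) * m2 ^ Suc (Suc k)"
    unfolding "3.IH"[OF "3.prems"] quadratic_root_power_Suc_Suc[OF "3.prems"(1)] quadratic_root_power_Suc_Suc[OF "3.prems"(2)]
    by (simp add: ring_distribs)
  finally show ?case .
qed (simp_all add: algebra_simps)

lemma osc_seq_double_root: "osc_seq 2 a c k = (- 1) ^ k * (a - real k * (a + c))"
  by (induction "2::real" a c k rule: osc_seq.induct) (simp_all add: algebra_simps)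

lemma osc_seq_double_root_egf:
  "(\<lambda>k. t ^ k / fact k * osc_seq 2 a c k) sums ((a + (a + c) * t) * exp (- t))"
proof -
  have "(- t) ^ k /\<^sub>R fact k = t ^ k / fact k * (- 1) ^ k" for k
    by (subst power_minus) (simp add: divide_inverse mult_ac)
  with exp_converges[of "- t"] have alt: "(\<lambda>k. t ^ k / fact k * (- 1) ^ k) sums exp (- t)"
    by simp
  define f where "f k = t ^ k / fact k * (- 1) ^ k * real k" for k
  have "f (Suc k) = - t * (t ^ k / fact k * (- 1) ^ k)" for k
    unfolding f_def by (simp add: field_simps del: of_nat_Suc)
  with sums_mult[OF alt, of "- t"] have "(\<lambda>k. f (Suc k)) sums (- t * exp (- t))"
    by simp
  then have "f sums (- t * exp (- t) + f 0)"
    by (simp only: sums_Suc_iff)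
  then have lin: "f sums (- t * exp (- t))"
    by (simp add: f_def)
  have "(\<lambda>k. a * (t ^ k / fact k * (- 1) ^ k) - (a + c) * f k) sums
      (a * exp (- t) - (a + c) * (- t * exp (- t)))"
    by (intro sums_diff sums_mult alt lin)
  moreover have "a * (t ^ k / fact k * (- 1) ^ k) - (a + c) * f k = t ^ k / fact k * osc_seq 2 a c k" for k
    unfolding osc_seq_double_root f_def by (simp add: algebra_simps add_divide_distrib)
  ultimately show ?thesis
    by (simp add: algebra_simps)
qed

lemma osc_seq_distinct_roots_egf:
  fixes m1 m2 :: complex
  assumes "m1 ^ 2 + of_real p * m1 + 1 = 0" and "m2 ^ 2 + of_real p * m2 + 1 = 0"
    and "m1 \<noteq> m2" and "Re m1 < 0" and "Re m2 < 0"
  obtains F where "\<And>t. (\<lambda>k. t ^ k / fact k * osc_seq p a c k) sums F t" and "(F \<longlongrightarrow> 0) at_top"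
proof -
  define A where "A = (of_real c - m2 * of_real a) / (m1 - m2)"
  define B where "B = (of_real c - m1 * of_real a) / (m1 - m2)"
  define Z where "Z t = A * exp (of_real t * m1) - B * exp (of_real t * m2)" for t
  have seq: "of_real (osc_seq p a c k) = A * m1 ^ k - B * m2 ^ k" for k
    using osc_seq_distinct_roots[OF assms(1,2), of a c k] assms(3)
    by (simp add: A_def B_def eq_divide_eq diff_divide_distrib[symmetric] mult.commute)
  have "(\<lambda>k. A * (of_real (t ^ k / fact k) * m1 ^ k) - B * (of_real (t ^ k / fact k) * m2 ^ k)) sums Z t" for t
    unfolding Z_def by (intro sums_diff sums_mult complex_exp_egf)
  then have "(\<lambda>k. of_real (t ^ k / fact k * osc_seq p a c k)) sums Z t" for t
    by (simp add: seq algebra_simps diff_divide_distrib)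
  from sums_Re[OF this] have "(\<lambda>k. t ^ k / fact k * osc_seq p a c k) sums Re (Z t)" for t
    by (simp only: Re_complex_of_real)
  moreover have "((\<lambda>t. Re (Z t)) \<longlongrightarrow> 0) at_top"
  proof -
    have "(Z \<longlongrightarrow> A * 0 - B * 0) at_top"
      unfolding Z_def by (intro tendsto_intros tendsto_exp_mult_at_top_zero assms(4,5))
    from tendsto_Re[OF this] show ?thesis by simp
  qed
  ultimately show ?thesis by (rule that)
qed

lemma osc_seq_egf_tendsto_zero:
  assumes "p > 0"
  obtains F where "\<And>t. (\<lambda>k. t ^ k / fact k * osc_seq p a c k) sums F t" and "(F \<longlongrightarrow> 0) at_top"
proof (cases "p = 2")
  case True
  have "((\<lambda>t::real. exp (- t)) \<longlongrightarrow> 0) at_top"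
    by (rule filterlim_compose[OF exp_at_bot filterlim_uminus_at_bot_at_top])
  moreover have "((\<lambda>t::real. t * exp (- t)) \<longlongrightarrow> 0) at_top"
    using tendsto_power_div_exp_0[of 1] by (simp add: exp_minus divide_inverse)
  ultimately have "((\<lambda>t. a * exp (- t) + (a + c) * (t * exp (- t))) \<longlongrightarrow> a * 0 + (a + c) * 0) at_top"
    by (intro tendsto_intros)
  then have "((\<lambda>t. (a + (a + c) * t) * exp (- t)) \<longlongrightarrow> 0) at_top"
    by (simp add: algebra_simps)
  with osc_seq_double_root_egf True show ?thesis
    by (intro that[of "\<lambda>t. (a + (a + c) * t) * exp (- t)"]) auto
next
  case False
  define d where "d = csqrt (of_real (p ^ 2 - 4))"
  define m1 where "m1 = (d - of_real p) / 2"
  define m2 where "m2 = (- d - of_real p) / 2"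
  have d2: "d ^ 2 = of_real (p ^ 2 - 4)" by (simp add: d_def)
  have "m1 ^ 2 + of_real p * m1 + 1 = (d ^ 2 - of_real (p ^ 2 - 4)) / 4"
    and "m2 ^ 2 + of_real p * m2 + 1 = (d ^ 2 - of_real (p ^ 2 - 4)) / 4"
    by (simp_all add: m1_def m2_def field_simps power2_eq_square)
  with d2 have roots: "m1 ^ 2 + of_real p * m1 + 1 = 0" "m2 ^ 2 + of_real p * m2 + 1 = 0"
    by simp_all
  have "d \<noteq> 0"
  proof
    assume "d = 0"
    with d2 have "of_real (p ^ 2 - 4) = (0 :: complex)" by simp
    then have "p ^ 2 = 2 ^ 2" by (simp only: of_real_eq_0_iff) simp
    with False assms show False using power2_eq_iff_nonneg[of p 2] by simp
  qed
  then have "m1 \<noteq> m2" by (simp add: m1_def m2_def)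
  from osc_seq_distinct_roots_egf[OF roots this quadratic_root_Re_neg[OF roots(1) assms] quadratic_root_Re_neg[OF roots(2) assms]]
  show ?thesis using that by blast
qed

lemma mat_exp_mult_vector_rotation:
  assumes "M *v (M *v w) + w = 0"
  shows "mat_exp (t *\<^sub>R M) *v w = cos t *\<^sub>R w + sin t *\<^sub>R (M *v w)"
  using mat_exp_mult_vector_osc_seq[where p = 0, OF _ osc_seq_zero_egf osc_seq_zero_egf] assms by simp

lemma mat_exp_mult_vector_tendsto_zero:
  assumes "M *v (M *v w) + p *\<^sub>R (M *v w) + w = 0" and "p > 0"
  shows "((\<lambda>t. mat_exp (t *\<^sub>R M) *v w) \<longlongrightarrow> 0) at_top"
proof -
  obtain F where F: "\<And>t. (\<lambda>k. t ^ k / fact k * osc_seq p 1 0 k) sums F t" "(F \<longlongrightarrow> 0) at_top"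
    using osc_seq_egf_tendsto_zero[OF assms(2)] by metis
  obtain G where G: "\<And>t. (\<lambda>k. t ^ k / fact k * osc_seq p 0 1 k) sums G t" "(G \<longlongrightarrow> 0) at_top"
    using osc_seq_egf_tendsto_zero[OF assms(2)] by metis
  have "((\<lambda>t. F t *\<^sub>R w + G t *\<^sub>R (M *v w)) \<longlongrightarrow> 0 *\<^sub>R w + 0 *\<^sub>R (M *v w)) at_top"
    by (intro tendsto_intros F(2) G(2))
  then show ?thesis
    by (simp add: mat_exp_mult_vector_osc_seq[OF assms(1) F(1) G(1)])
qed

section \<open>Spectral theorem for symmetric matrices\<close>

lemma symmetric_matrix_inner_commute:
  fixes A :: "real^'n::finite^'n"
  assumes "transpose A = A"
  shows "x \<bullet> (A *v y) = (A *v x) \<bullet> y"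
  by (metis assms dot_lmul_matrix transpose_matrix_vector)

lemma linear_coeff_zero_if_quadratic_nonpos:
  fixes a c :: real
  assumes "\<And>s. 2 * s * a + s ^ 2 * c \<le> 0"
  shows "a = 0"
proof (rule ccontr)
  assume "a \<noteq> 0"
  define k where "k = \<bar>c\<bar> + 1"
  have "k > 0" "2 * k + c > 0" by (auto simp: k_def abs_if)
  with \<open>a \<noteq> 0\<close> have "0 < a ^ 2 * (2 * k + c) / k ^ 2" by simp
  also have "\<dots> = 2 * (a / k) * a + (a / k) ^ 2 * c"
    using \<open>k > 0\<close> by (simp add: field_simps power2_eq_square)
  finally show False using assms[of "a / k"] by simp
qed

lemma rayleigh_maximizer_is_eigenvector:
  fixes A :: "real^'n::finite^'n"
  assumes sym: "transpose A = A" and V: "subspace V" and inv: "\<And>x. x \<in> V \<Longrightarrow> A *v x \<in> V"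
    and x0: "x0 \<in> V" "norm x0 = 1"
    and max: "\<And>y. y \<in> V \<Longrightarrow> norm y = 1 \<Longrightarrow> y \<bullet> (A *v y) \<le> x0 \<bullet> (A *v x0)"
  shows "A *v x0 = (x0 \<bullet> (A *v x0)) *\<^sub>R x0"
proof -
  define \<mu> where "\<mu> = x0 \<bullet> (A *v x0)"
  have x0x0: "x0 \<bullet> x0 = 1" using x0(2) by (simp add: dot_square_norm)
  have rayleigh: "y \<bullet> (A *v y) \<le> \<mu> * (y \<bullet> y)" if "y \<in> V" for y
  proof (cases "y = 0")
    case False
    then have "norm y > 0" by simp
    with that V have "(1 / norm y) *\<^sub>R y \<in> V" "norm ((1 / norm y) *\<^sub>R y) = 1"
      by (simp_all add: subspace_scale)
    from max[OF this] have "(y \<bullet> (A *v y)) / (norm y)\<^sup>2 \<le> \<mu>"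
      by (simp add: \<mu>_def matrix_vector_mult_scaleR power2_eq_square)
    with \<open>norm y > 0\<close> show ?thesis
      by (simp add: pos_divide_le_eq power2_norm_eq_inner)
  qed simp
  \<comment> \<open>Along x0 + s y the bound is a quadratic inequality in s that is tight at s = 0,
    so its linear coefficient vanishes.\<close>
  have orth: "y \<bullet> (A *v x0) = 0" if "y \<in> V" "x0 \<bullet> y = 0" for y
  proof (intro linear_coeff_zero_if_quadratic_nonpos[where c = "y \<bullet> (A *v y) - \<mu> * (y \<bullet> y)"])
    fix s :: real
    have "x0 + s *\<^sub>R y \<in> V" using V that x0 by (simp add: subspace_add subspace_scale)
    note rayleigh[OF this]
    moreover have "(x0 + s *\<^sub>R y) \<bullet> (x0 + s *\<^sub>R y) = 1 + s ^ 2 * (y \<bullet> y)"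
      using that(2) x0x0 by (simp add: inner_add_left inner_add_right inner_commute power2_eq_square)
    moreover have "x0 \<bullet> (A *v y) = y \<bullet> (A *v x0)"
      using symmetric_matrix_inner_commute[OF sym, of x0 y] by (simp add: inner_commute)
    then have "(x0 + s *\<^sub>R y) \<bullet> (A *v (x0 + s *\<^sub>R y)) =
        \<mu> + 2 * s * (y \<bullet> (A *v x0)) + s ^ 2 * (y \<bullet> (A *v y))"
      by (simp add: \<mu>_def inner_add_left inner_add_right matrix_vector_right_distrib
          matrix_vector_mult_scaleR power2_eq_square algebra_simps)
    ultimately have "\<mu> + 2 * s * (y \<bullet> (A *v x0)) + s ^ 2 * (y \<bullet> (A *v y)) \<le> \<mu> * (1 + s ^ 2 * (y \<bullet> y))"
      by (simp only:)
    then show "2 * s * (y \<bullet> (A *v x0)) + s ^ 2 * (y \<bullet> (A *v y) - \<mu> * (y \<bullet> y)) \<le> 0"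
      by (simp add: algebra_simps)
  qed
  define w where "w = A *v x0 - \<mu> *\<^sub>R x0"
  have "w \<in> V" unfolding w_def using inv x0 V by (simp add: subspace_diff subspace_scale)
  moreover have "x0 \<bullet> w = 0" unfolding w_def using x0x0 by (simp add: inner_diff_right \<mu>_def)
  ultimately have "w \<bullet> (A *v x0) = 0" by (rule orth)
  with \<open>x0 \<bullet> w = 0\<close> have "w \<bullet> w = 0"
    unfolding w_def by (simp add: inner_diff_left inner_diff_right inner_commute)
  then show ?thesis unfolding w_def \<mu>_def by simp
qed

lemma symmetric_invariant_subspace_has_eigenvector:
  fixes A :: "real^'n::finite^'n"
  assumes sym: "transpose A = A" and V: "subspace V" and inv: "\<And>x. x \<in> V \<Longrightarrow> A *v x \<in> V"
    and "v \<in> V" "v \<noteq> 0"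
  obtains x0 where "x0 \<in> V" "norm x0 = 1" "A *v x0 = (x0 \<bullet> (A *v x0)) *\<^sub>R x0"
proof -
  define S where "S = sphere 0 1 \<inter> V"
  have "compact S" unfolding S_def
    by (intro compact_Int_closed closed_subspace V compact_sphere)
  moreover have "(1 / norm v) *\<^sub>R v \<in> S"
    unfolding S_def using assms(4,5) V by (simp add: subspace_scale)
  then have "S \<noteq> {}" by blast
  moreover have "continuous_on S (\<lambda>x. x \<bullet> (A *v x))"
    by (rule continuous_on_inner[OF continuous_on_id linear_continuous_on[OF matrix_vector_mul_bounded_linear]])
  ultimately have "\<exists>x0\<in>S. \<forall>y\<in>S. y \<bullet> (A *v y) \<le> x0 \<bullet> (A *v x0)"
    by (rule continuous_attains_sup)
  then obtain x0 where x0: "x0 \<in> V" "norm x0 = 1"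
    and max: "\<And>y. y \<in> V \<Longrightarrow> norm y = 1 \<Longrightarrow> y \<bullet> (A *v y) \<le> x0 \<bullet> (A *v x0)"
    unfolding S_def by auto
  show ?thesis
    by (rule that[OF x0 rayleigh_maximizer_is_eigenvector[OF sym V inv x0 max]])
qed

locale orthonormal_eigenbasis =
  fixes A :: "real^'n::finite^'n" and B :: "(real^'n) set"
  assumes finite_basis: "finite B"
    and inner_basis: "b \<in> B \<Longrightarrow> c \<in> B \<Longrightarrow> b \<bullet> c = (if b = c then 1 else 0)"
    and basis_eigenvector: "b \<in> B \<Longrightarrow> A *v b = (b \<bullet> (A *v b)) *\<^sub>R b"
    and basis_expansion: "x = (\<Sum>b\<in>B. (b \<bullet> x) *\<^sub>R b)"

lemma orthonormal_span_expansion: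
  fixes B :: "'a::real_inner set"
  assumes "finite B" and orth: "\<forall>b\<in>B. \<forall>c\<in>B. b \<bullet> c = (if b = c then 1 else 0)" and "x \<in> span B"
  shows "x = (\<Sum>b\<in>B. (b \<bullet> x) *\<^sub>R b)"
proof -
  obtain u where u: "x = (\<Sum>c\<in>B. u c *\<^sub>R c)"
    using span_finite[OF assms(1)] assms(3) by auto
  have "b \<bullet> x = u b" if "b \<in> B" for b
  proof -
    have "b \<bullet> x = (\<Sum>c\<in>B. u c * (if b = c then 1 else 0))"
      unfolding u using orth that by (simp add: inner_sum_right)
    also have "\<dots> = u b" using assms(1) that by (simp add: if_distrib cong: if_cong)
    finally show ?thesis .
  qed
  then show ?thesis using u by simp
qed

lemma eigenvector_orthogonal_complement:
  fixes A :: "real^'n::finite^'n"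
  assumes sym: "transpose A = A" and V: "subspace V" and inv: "\<And>x. x \<in> V \<Longrightarrow> A *v x \<in> V"
    and x0: "x0 \<in> V" "x0 \<bullet> x0 = 1" and eig: "A *v x0 = (x0 \<bullet> (A *v x0)) *\<^sub>R x0"
  defines "V' \<equiv> {y \<in> V. x0 \<bullet> y = 0}"
  shows "subspace V'" and "\<And>x. x \<in> V' \<Longrightarrow> A *v x \<in> V'" and "dim V' < dim V"
    and "\<And>y. y \<in> V \<Longrightarrow> y - (x0 \<bullet> y) *\<^sub>R x0 \<in> V'"
proof -
  show V': "subspace V'" unfolding V'_def subspace_def using V
    by (auto simp: subspace_0 subspace_add subspace_scale inner_add_right)
  show "A *v x \<in> V'" if "x \<in> V'" for x
  proof -
    have "x0 \<bullet> (A *v x) = (A *v x0) \<bullet> x" by (rule symmetric_matrix_inner_commute[OF sym])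
    also have "\<dots> = (x0 \<bullet> (A *v x0)) * (x0 \<bullet> x)" by (subst eig) simp
    finally show ?thesis using that inv by (simp add: V'_def)
  qed
  have "x0 \<notin> V'" using x0(2) by (simp add: V'_def)
  with x0(1) have "V' \<subset> V" unfolding V'_def by blast
  then show "dim V' < dim V"
    using V V' by (intro dim_psubset) (simp add: span_eq_iff[THEN iffD2])
  show "y - (x0 \<bullet> y) *\<^sub>R x0 \<in> V'" if "y \<in> V" for y
    using that x0 V by (simp add: V'_def subspace_diff subspace_scale inner_diff_right)
qed

lemma symmetric_invariant_subspace_eigenbasis:
  fixes A :: "real^'n::finite^'n"
  assumes sym: "transpose A = A"
  shows "subspace V \<Longrightarrow> (\<And>x. x \<in> V \<Longrightarrow> A *v x \<in> V) \<Longrightarrow>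
    \<exists>B\<subseteq>V. finite B \<and> (\<forall>b\<in>B. \<forall>c\<in>B. b \<bullet> c = (if b = c then 1 else 0))
      \<and> (\<forall>b\<in>B. A *v b = (b \<bullet> (A *v b)) *\<^sub>R b) \<and> V \<subseteq> span B"
proof (induction "dim V" arbitrary: V rule: less_induct)
  case less
  note V = less.prems(1) and inv = less.prems(2)
  show ?case
  proof (cases "V \<subseteq> {0}")
    case True
    then show ?thesis by (intro exI[of _ "{}"]) auto
  next
    case False
    then obtain v where "v \<in> V" "v \<noteq> 0" by auto
    with symmetric_invariant_subspace_has_eigenvector[OF sym V inv]
    obtain x0 where x0: "x0 \<in> V" "norm x0 = 1" and eig: "A *v x0 = (x0 \<bullet> (A *v x0)) *\<^sub>R x0"
      by blast
    have x0x0: "x0 \<bullet> x0 = 1" using x0(2) by (simp add: dot_square_norm)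
    define V' where "V' = {y \<in> V. x0 \<bullet> y = 0}"
    note complement = eigenvector_orthogonal_complement[OF sym V inv x0(1) x0x0 eig, folded V'_def]
    from less.hyps[OF complement(3,1,2)] obtain B' where B': "B' \<subseteq> V'" "finite B'"
      "\<forall>b\<in>B'. \<forall>c\<in>B'. b \<bullet> c = (if b = c then 1 else 0)"
      "\<forall>b\<in>B'. A *v b = (b \<bullet> (A *v b)) *\<^sub>R b" "V' \<subseteq> span B'"
      by blast
    have "V \<subseteq> span (insert x0 B')"
    proof
      fix y assume "y \<in> V"
      then have "y - (x0 \<bullet> y) *\<^sub>R x0 \<in> span (insert x0 B')"
        using complement(4) B'(5) span_mono[of B' "insert x0 B'"] by auto
      moreover have "(x0 \<bullet> y) *\<^sub>R x0 \<in> span (insert x0 B')"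
        by (simp add: span_base span_scale)
      ultimately show "y \<in> span (insert x0 B')"
        using span_add by fastforce
    qed
    moreover have "x0 \<bullet> b = 0" "b \<noteq> x0" if "b \<in> B'" for b
      using that B'(1) x0x0 by (auto simp: V'_def)
    ultimately show ?thesis
      using x0 x0x0 eig B' by (intro exI[of _ "insert x0 B'"]) (auto simp: V'_def inner_commute)
  qed
qed

lemma symmetric_matrix_orthonormal_eigenbasis:
  fixes A :: "real^'n::finite^'n"
  assumes "transpose A = A"
  obtains B where "orthonormal_eigenbasis A B"
proof -
  obtain B where "finite B" and orth: "\<forall>b\<in>B. \<forall>c\<in>B. b \<bullet> c = (if b = c then 1 else 0)"
    and "\<forall>b\<in>B. A *v b = (b \<bullet> (A *v b)) *\<^sub>R b" and "UNIV \<subseteq> span B"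
    using symmetric_invariant_subspace_eigenbasis[OF assms, of UNIV] by auto
  with orthonormal_span_expansion[OF \<open>finite B\<close> orth] show ?thesis
    by (intro that) (unfold_locales, auto simp: subset_eq)
qed

section \<open>Positive definite square roots and inverses\<close>

lemma pos_def_matrix_sqrt_unique:
  fixes P Q :: "real^'n::finite^'n"
  assumes P: "pos_def_matrix P" and Q: "pos_def_matrix Q" and PQ: "P ** P = Q ** Q"
  shows "P = Q"
proof -
  define D where "D = P - Q"
  have "transpose D = D" using P Q by (simp add: D_def pos_def_matrix_def transpose_def vec_eq_iff)
  then obtain B where "orthonormal_eigenbasis D B"
    using symmetric_matrix_orthonormal_eigenbasis by blast
  then interpret orthonormal_eigenbasis D B .
  have kernel: "D *v b = 0" if "b \<in> B" for b
  proof -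
    define \<mu> where "\<mu> = b \<bullet> (D *v b)"
    have eig: "D *v b = \<mu> *\<^sub>R b" and "b \<bullet> b = 1"
      using basis_eigenvector inner_basis that by (simp_all add: \<mu>_def)
    then have "b \<noteq> 0" by auto
    \<comment> \<open>P^2 - Q^2 = P D + D Q, whose quadratic form at b is \<mu> (b P b + b Q b).\<close>
    have "P *v (D *v b) + D *v (Q *v b) = (P ** P) *v b - (Q ** Q) *v b"
      by (simp add: D_def matrix_vector_mult_diff_rdistrib matrix_vector_mult_diff_distrib
          matrix_vector_mul_assoc[symmetric])
    then have "b \<bullet> (P *v (D *v b)) + b \<bullet> (D *v (Q *v b)) = 0"
      using PQ by (simp flip: inner_add_right)
    moreover have "b \<bullet> (D *v (Q *v b)) = \<mu> * (b \<bullet> (Q *v b))"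
      using symmetric_matrix_inner_commute[OF \<open>transpose D = D\<close>] eig by simp
    ultimately have "\<mu> * (b \<bullet> (P *v b) + b \<bullet> (Q *v b)) = 0"
      using eig by (simp add: matrix_vector_mult_scaleR distrib_left)
    moreover have "b \<bullet> (P *v b) + b \<bullet> (Q *v b) > 0"
      using P Q \<open>b \<noteq> 0\<close> by (simp add: pos_def_matrix_def add_pos_pos)
    ultimately show ?thesis using eig by simp
  qed
  have "D *v x = 0" for x
  proof -
    have "D *v x = D *v (\<Sum>b\<in>B. (b \<bullet> x) *\<^sub>R b)" by (rule arg_cong[OF basis_expansion])
    also have "\<dots> = (\<Sum>b\<in>B. (b \<bullet> x) *\<^sub>R (D *v b))"
      by (simp only: matrix_vector_mult_sum matrix_vector_mult_scaleR)
    also have "\<dots> = 0" by (intro sum.neutral) (simp add: kernel)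
    finally show ?thesis .
  qed
  then show ?thesis by (simp add: D_def matrix_eq matrix_vector_mult_diff_rdistrib)
qed

lemma mat_sqrt_eqI: "pos_def_matrix P \<Longrightarrow> P ** P = M \<Longrightarrow> mat_sqrt M = P"
  unfolding mat_sqrt_def by (rule the_equality) (auto intro: pos_def_matrix_sqrt_unique)

lemma matrix_inv_eqI:
  fixes A A' :: "real^'n::finite^'n"
  assumes "A ** A' = mat 1"
  shows "matrix_inv A = A'"
proof -
  have "A' ** A = mat 1" using assms matrix_left_right_inverse by blast
  with assms have "A ** matrix_inv A = mat 1 \<and> matrix_inv A ** A = mat 1"
    unfolding matrix_inv_def by (rule someI[of _ A', OF conjI])
  then have "matrix_inv A = matrix_inv A ** (A ** A')" using assms by simp
  also have "\<dots> = A'" using \<open>_ \<and> matrix_inv A ** A = mat 1\<close> by (simp add: matrix_mul_assoc)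
  finally show ?thesis .
qed

section \<open>Graph Laplacian\<close>

lemma laplacian_mult_vector:
  "(laplacian E *v x) $ i = (\<Sum>j\<in>UNIV. if E i j then x $ i - x $ j else 0)"
proof -
  define d where "d = real (card {j. E i j})"
  have "(laplacian E *v x) $ i = (\<Sum>j\<in>UNIV. (if i = j then d else 0) * x $ j)
      - (\<Sum>j\<in>UNIV. (if E i j then 1 else 0) * x $ j)"
    unfolding d_def by (simp add: laplacian_def degree_matrix_def adj_matrix_def
        matrix_vector_mult_def left_diff_distrib sum_subtractf)
  also have "(\<Sum>j\<in>UNIV. (if i = j then d else 0) * x $ j) = (\<Sum>j\<in>UNIV. if i = j then d * x $ j else 0)"
    by (rule sum.cong) auto
  also have "(\<Sum>j\<in>UNIV. (if E i j then 1 else 0) * x $ j) = (\<Sum>j\<in>UNIV. if E i j then x $ j else 0)"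
    by (rule sum.cong) auto
  also have "d = (\<Sum>j\<in>UNIV. if E i j then 1 else 0)"
    unfolding d_def by (simp add: sum.If_cases)
  finally show ?thesis
    by (simp add: sum_distrib_right sum_subtractf[symmetric] if_distrib cong: if_cong)
qed

lemma laplacian_mult_one: "laplacian E *v 1 = 0"
  by (simp add: vec_eq_iff laplacian_mult_vector cong: if_cong)

locale connected_graph =
  fixes E :: "'n::finite \<Rightarrow> 'n \<Rightarrow> bool"
  assumes symmetric: "\<And>i j. E i j \<longleftrightarrow> E j i"
    and connected: "\<And>i j. (i, j) \<in> {(a, b). E a b}\<^sup>*"
begin

lemma transpose_laplacian: "transpose (laplacian E) = laplacian E"
  by (simp add: vec_eq_iff transpose_def laplacian_def degree_matrix_def adj_matrix_def symmetric)

lemma laplacian_quadratic_form: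
  "2 * (x \<bullet> (laplacian E *v x)) = (\<Sum>i\<in>UNIV. \<Sum>j\<in>UNIV. if E i j then (x $ i - x $ j)\<^sup>2 else 0)"
proof -
  define Q where "Q = (\<Sum>i\<in>UNIV. \<Sum>j\<in>UNIV. if E i j then x $ i * (x $ i - x $ j) else 0)"
  have "x \<bullet> (laplacian E *v x) = Q"
    by (simp add: Q_def inner_vec_def laplacian_mult_vector sum_distrib_left if_distrib if_distribR
        cong: if_cong)
  moreover have "Q = (\<Sum>i\<in>UNIV. \<Sum>j\<in>UNIV. if E i j then x $ j * (x $ j - x $ i) else 0)"
    unfolding Q_def by (subst sum.swap) (simp add: symmetric)
  ultimately have "2 * (x \<bullet> (laplacian E *v x)) =
      (\<Sum>i\<in>UNIV. \<Sum>j\<in>UNIV.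
        (if E i j then x $ i * (x $ i - x $ j) else 0) + (if E i j then x $ j * (x $ j - x $ i) else 0))"
    by (simp add: Q_def sum.distrib)
  also have "\<dots> = (\<Sum>i\<in>UNIV. \<Sum>j\<in>UNIV. if E i j then (x $ i - x $ j)\<^sup>2 else 0)"
    by (intro sum.cong refl) (simp add: power2_eq_square algebra_simps)
  finally show ?thesis .
qed

lemma laplacian_nonneg: "0 \<le> x \<bullet> (laplacian E *v x)"
proof -
  have "0 \<le> (\<Sum>i\<in>UNIV. \<Sum>j\<in>UNIV. if E i j then (x $ i - x $ j)\<^sup>2 else (0::real))"
    by (intro sum_nonneg) auto
  then show ?thesis using laplacian_quadratic_form[of x] by simp
qed

lemma laplacian_null_imp_constant:
  assumes "x \<bullet> (laplacian E *v x) = 0"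
  shows "x = x $ k *\<^sub>R 1"
proof -
  have edge: "x $ i = x $ j" if "E i j" for i j
  proof -
    have "(\<Sum>i\<in>UNIV. \<Sum>j\<in>UNIV. if E i j then (x $ i - x $ j)\<^sup>2 else (0::real)) = 0"
      using laplacian_quadratic_form[of x] assms by simp
    then have "(if E i j then (x $ i - x $ j)\<^sup>2 else (0::real)) = 0"
      by (simp add: sum_nonneg_eq_0_iff sum_nonneg)
    with that show ?thesis by simp
  qed
  have "x $ i = x $ k" for i
    using connected[of k i] by (induction rule: rtrancl_induct) (auto dest: edge)
  then show ?thesis by (simp add: vec_eq_iff)
qed

end

section \<open>Position-velocity block matrices\<close>

definition stack :: "real^'n \<Rightarrow> real^'n \<Rightarrow> real^('n::finite + 'n)" where
  "stack x v = (\<chi> a. case a of Inl i \<Rightarrow> x $ i | Inr i \<Rightarrow> v $ i)"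

definition upper_half :: "real^('n::finite + 'n) \<Rightarrow> real^'n" where
  "upper_half z = (\<chi> i. z $ Inl i)"

definition lower_half :: "real^('n::finite + 'n) \<Rightarrow> real^'n" where
  "lower_half z = (\<chi> i. z $ Inr i)"

definition block ::
    "real^'n^'n \<Rightarrow> real^'n^'n \<Rightarrow> real^'n^'n \<Rightarrow> real^'n^'n \<Rightarrow> real^('n::finite + 'n)^('n + 'n)" where
  "block A B C D = (\<chi> a c. case (a, c) of
       (Inl i, Inl j) \<Rightarrow> A $ i $ j | (Inl i, Inr j) \<Rightarrow> B $ i $ j
     | (Inr i, Inl j) \<Rightarrow> C $ i $ j | (Inr i, Inr j) \<Rightarrow> D $ i $ j)"

lemma stack_nth [simp]: "stack x v $ Inl i = x $ i" "stack x v $ Inr i = v $ i"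
  by (simp_all add: stack_def)

lemma stack_halves: "stack (upper_half z) (lower_half z) = z"
  by (simp add: vec_eq_iff stack_def upper_half_def lower_half_def split: sum.split)

lemma stack_add: "stack x v + stack x' v' = stack (x + x') (v + v')"
  by (simp add: vec_eq_iff stack_def split: sum.split)

lemma stack_scaleR: "c *\<^sub>R stack x v = stack (c *\<^sub>R x) (c *\<^sub>R v)"
  by (simp add: vec_eq_iff stack_def split: sum.split)

lemma stack_zero: "stack 0 0 = 0"
  by (simp add: vec_eq_iff stack_def split: sum.split)

lemma stack_sum: "(\<Sum>b\<in>S. stack (f b) (g b)) = stack (\<Sum>b\<in>S. f b) (\<Sum>b\<in>S. g b)"
  by (simp add: vec_eq_iff stack_def sum_component split: sum.split)

lemma sum_UNIV_Plus:
  fixes f :: "'a::finite + 'b::finite \<Rightarrow> 'c::comm_monoid_add"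
  shows "(\<Sum>a\<in>UNIV. f a) = (\<Sum>i\<in>UNIV. f (Inl i)) + (\<Sum>i\<in>UNIV. f (Inr i))"
  by (subst UNIV_Plus_UNIV[symmetric], subst sum.Plus) auto

lemma inner_stack: "stack x v \<bullet> stack x' v' = x \<bullet> x' + v \<bullet> v'"
  by (simp add: inner_vec_def sum_UNIV_Plus)

lemma block_mult_stack: "block A B C D *v stack x v = stack (A *v x + B *v v) (C *v x + D *v v)"
  unfolding vec_eq_iff
proof
  fix a
  show "(block A B C D *v stack x v) $ a = stack (A *v x + B *v v) (C *v x + D *v v) $ a"
    by (cases a) (simp_all add: block_def matrix_vector_mult_def sum_UNIV_Plus)
qed

lemma transpose_block: "transpose (block A B C D) = block (transpose A) (transpose C) (transpose B) (transpose D)"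
  by (simp add: vec_eq_iff block_def transpose_def split: sum.split)

lemma block_G_eq_block: "block_G L = block (mat 0) (mat 1) (- mat 1) (- L)"
  by (simp add: vec_eq_iff block_def block_G_def mat_def split: sum.split)

section \<open>Spectral calculus on the modes of the Laplacian\<close>

lemma matrix_vector_mult_uminus: "(- M) *v x = - (M *v (x::real^'n::finite))"
  by (simp add: vec_eq_iff matrix_vector_mult_def sum_negf)

locale laplacian_eigenbasis = connected_graph E + orthonormal_eigenbasis "laplacian E" B
  for E :: "'n::finite \<Rightarrow> 'n \<Rightarrow> bool" and B
begin

definition eigenvalue :: "real^'n \<Rightarrow> real" where
  "eigenvalue b = b \<bullet> (laplacian E *v b)"

lemma laplacian_mult_basis: "b \<in> B \<Longrightarrow> laplacian E *v b = eigenvalue b *\<^sub>R b"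
  using basis_eigenvector by (simp add: eigenvalue_def)

lemma eigenvalue_nonneg: "0 \<le> eigenvalue b"
  unfolding eigenvalue_def by (rule laplacian_nonneg)

lemma basis_orthogonal_one:
  assumes "b \<in> B" and "eigenvalue b \<noteq> 0"
  shows "b \<bullet> 1 = 0"
proof -
  have "eigenvalue b * (b \<bullet> 1) = (laplacian E *v b) \<bullet> 1"
    using laplacian_mult_basis[OF assms(1)] by simp
  also have "\<dots> = b \<bullet> (laplacian E *v 1)"
    by (simp add: symmetric_matrix_inner_commute[OF transpose_laplacian])
  finally show ?thesis using assms(2) by (simp add: laplacian_mult_one)
qed

lemma kernel_projection:
  "(\<Sum>b\<in>{b\<in>B. eigenvalue b = 0}. (b \<bullet> x) *\<^sub>R b) = ((\<Sum>i\<in>UNIV. x $ i) / CARD('n)) *\<^sub>R 1"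
proof -
  define B0 where "B0 = {b\<in>B. eigenvalue b = 0}"
  obtain k :: 'n where True by blast
  define K where "K = (\<Sum>b\<in>B0. (b $ k)\<^sup>2)"
  have proj: "(\<Sum>b\<in>B0. (b \<bullet> y) *\<^sub>R b) = (K * (\<Sum>i\<in>UNIV. y $ i)) *\<^sub>R 1" for y
  proof -
    have "(b \<bullet> y) *\<^sub>R b = ((b $ k)\<^sup>2 * (\<Sum>i\<in>UNIV. y $ i)) *\<^sub>R 1" if "b \<in> B0" for b
    proof -
      have b: "b = b $ k *\<^sub>R 1"
        using that laplacian_null_imp_constant by (simp add: B0_def eigenvalue_def)
      have "b \<bullet> y = b $ k * (\<Sum>i\<in>UNIV. y $ i)"
        by (subst b) (simp add: inner_vec_def sum_distrib_left)
      then show ?thesis by (subst (2) b) (simp add: power2_eq_square)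
    qed
    then have "(\<Sum>b\<in>B0. (b \<bullet> y) *\<^sub>R b) = (\<Sum>b\<in>B0. ((b $ k)\<^sup>2 * (\<Sum>i\<in>UNIV. y $ i)) *\<^sub>R 1)"
      by (rule sum.cong[OF refl])
    then show ?thesis by (simp add: K_def scaleR_sum_left[symmetric] sum_distrib_right)
  qed
  have "1 = (\<Sum>b\<in>B. (b \<bullet> 1) *\<^sub>R b)" by (rule basis_expansion)
  also have "\<dots> = (\<Sum>b\<in>B0. (b \<bullet> 1) *\<^sub>R b)"
    using finite_basis basis_orthogonal_one by (intro sum.mono_neutral_right) (auto simp: B0_def)
  also have "\<dots> = (K * CARD('n)) *\<^sub>R 1" by (simp add: proj)
  finally have "(1 :: real^'n) $ k = ((K * CARD('n)) *\<^sub>R (1 :: real^'n)) $ k" by simp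
  then have "K = 1 / CARD('n)" by (simp add: field_simps)
  with proj[of x] show ?thesis by (simp add: B0_def)
qed

definition spectral_fun :: "(real \<Rightarrow> real) \<Rightarrow> real^'n^'n" where
  "spectral_fun f = (\<Sum>b\<in>B. f (eigenvalue b) *\<^sub>R (\<chi> i j. b $ i * b $ j))"

lemma spectral_fun_mult_vector: "spectral_fun f *v x = (\<Sum>b\<in>B. (f (eigenvalue b) * (b \<bullet> x)) *\<^sub>R b)"
  by (simp add: spectral_fun_def vec_eq_iff matrix_vector_mult_def inner_vec_def sum_distrib_left
      algebra_simps sum_component) (subst sum.swap, simp add: sum_distrib_left mult_ac)

lemma spectral_fun_mult_basis: "c \<in> B \<Longrightarrow> spectral_fun f *v c = f (eigenvalue c) *\<^sub>R c"
proof -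
  assume c: "c \<in> B"
  have "spectral_fun f *v c = (\<Sum>b\<in>B. if b = c then f (eigenvalue c) *\<^sub>R c else 0)"
    unfolding spectral_fun_mult_vector using c by (intro sum.cong refl) (simp add: inner_basis)
  also have "\<dots> = f (eigenvalue c) *\<^sub>R c" using c finite_basis by simp
  finally show ?thesis .
qed

lemma transpose_spectral_fun: "transpose (spectral_fun f) = spectral_fun f"
  by (simp add: spectral_fun_def vec_eq_iff transpose_def sum_component mult.commute)

definition mode :: "real^'n \<Rightarrow> real \<Rightarrow> real \<Rightarrow> real^('n + 'n)" where
  "mode b \<alpha> \<beta> = stack (\<alpha> *\<^sub>R b) (\<beta> *\<^sub>R b)"

lemma mode_add: "mode b \<alpha> \<beta> + mode b \<alpha>' \<beta>' = mode b (\<alpha> + \<alpha>') (\<beta> + \<beta>')"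
  by (simp add: mode_def stack_add scaleR_add_left)

lemma mode_scaleR: "c *\<^sub>R mode b \<alpha> \<beta> = mode b (c * \<alpha>) (c * \<beta>)"
  by (simp add: mode_def stack_scaleR)

lemma mode_zero: "mode b 0 0 = 0"
  by (simp add: mode_def stack_zero)

lemma inner_mode:
  "b \<in> B \<Longrightarrow> c \<in> B \<Longrightarrow> mode b \<alpha> \<beta> \<bullet> mode c \<alpha>' \<beta>' = (if b = c then \<alpha> * \<alpha>' + \<beta> * \<beta>' else 0)"
  by (simp add: mode_def inner_stack inner_basis)

lemma mode_expansion: "z = (\<Sum>b\<in>B. mode b (b \<bullet> upper_half z) (b \<bullet> lower_half z))"
proof -
  have "z = stack (upper_half z) (lower_half z)" by (rule stack_halves[symmetric])
  also have "\<dots> = stack (\<Sum>b\<in>B. (b \<bullet> upper_half z) *\<^sub>R b) (\<Sum>b\<in>B. (b \<bullet> lower_half z) *\<^sub>R b)"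
    by (rule arg_cong2[OF basis_expansion basis_expansion])
  finally show ?thesis by (simp add: mode_def stack_sum)
qed

lemma matrix_eq_on_modes:
  fixes M N :: "real^('n + 'n)^('n + 'n)"
  assumes "\<And>b \<alpha> \<beta>. b \<in> B \<Longrightarrow> M *v mode b \<alpha> \<beta> = N *v mode b \<alpha> \<beta>"
  shows "M = N"
proof (rule iffD2[OF matrix_eq], intro allI)
  fix z
  have "M *v z = M *v (\<Sum>b\<in>B. mode b (b \<bullet> upper_half z) (b \<bullet> lower_half z))"
    by (rule arg_cong[OF mode_expansion])
  also have "\<dots> = N *v (\<Sum>b\<in>B. mode b (b \<bullet> upper_half z) (b \<bullet> lower_half z))"
    using assms by (simp add: matrix_vector_mult_sum)
  also have "\<dots> = N *v z" by (rule arg_cong[OF mode_expansion[symmetric]])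
  finally show "M *v z = N *v z" .
qed

definition block_spectral ::
    "(real \<Rightarrow> real) \<Rightarrow> (real \<Rightarrow> real) \<Rightarrow> (real \<Rightarrow> real) \<Rightarrow> (real \<Rightarrow> real) \<Rightarrow> real^('n + 'n)^('n + 'n)" where
  "block_spectral f g h k = block (spectral_fun f) (spectral_fun g) (spectral_fun h) (spectral_fun k)"

lemma block_spectral_mult_mode:
  assumes "b \<in> B"
  shows "block_spectral f g h k *v mode b \<alpha> \<beta> =
    mode b (f (eigenvalue b) * \<alpha> + g (eigenvalue b) * \<beta>) (h (eigenvalue b) * \<alpha> + k (eigenvalue b) * \<beta>)"
  unfolding block_spectral_def mode_def block_mult_stack
  by (simp add: matrix_vector_mult_scaleR spectral_fun_mult_basis[OF assms] scaleR_add_left mult.commute)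

lemma block_spectral_mult:
  "block_spectral f g h k ** block_spectral f' g' h' k' =
    block_spectral (\<lambda>l. f l * f' l + g l * h' l) (\<lambda>l. f l * g' l + g l * k' l)
      (\<lambda>l. h l * f' l + k l * h' l) (\<lambda>l. h l * g' l + k l * k' l)"
  by (rule matrix_eq_on_modes)
    (simp add: matrix_vector_mul_assoc[symmetric] block_spectral_mult_mode algebra_simps)

lemma transpose_block_spectral: "transpose (block_spectral f g h k) = block_spectral f h g k"
  by (simp add: block_spectral_def transpose_block transpose_spectral_fun)

lemma block_spectral_one: "block_spectral (\<lambda>_. 1) (\<lambda>_. 0) (\<lambda>_. 0) (\<lambda>_. 1) = mat 1"
  by (rule matrix_eq_on_modes) (simp add: block_spectral_mult_mode)

lemma block_G_eq_block_spectral: "block_G (laplacian E) = block_spectral (\<lambda>_. 0) (\<lambda>_. 1) (\<lambda>_. - 1) uminus"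
  by (rule matrix_eq_on_modes, simp only: block_spectral_mult_mode)
    (simp add: block_G_eq_block mode_def block_mult_stack matrix_vector_mult_uminus
      matrix_vector_mult_scaleR laplacian_mult_basis algebra_simps)

lemma pos_def_block_spectral:
  assumes pos: "\<And>l \<alpha> \<beta>. (\<alpha>, \<beta>) \<noteq> (0, 0) \<Longrightarrow> 0 < \<alpha> * (f l * \<alpha> + g l * \<beta>) + \<beta> * (g l * \<alpha> + k l * \<beta>)"
  shows "pos_def_matrix (block_spectral f g g k)"
  unfolding pos_def_matrix_def
proof (intro conjI allI impI)
  show "transpose (block_spectral f g g k) = block_spectral f g g k"
    by (rule transpose_block_spectral)
  fix z :: "real^('n + 'n)" assume "z \<noteq> 0"
  define \<alpha> where "\<alpha> b = b \<bullet> upper_half z" for b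
  define \<beta> where "\<beta> b = b \<bullet> lower_half z" for b
  define q where "q b = \<alpha> b * (f (eigenvalue b) * \<alpha> b + g (eigenvalue b) * \<beta> b)
    + \<beta> b * (g (eigenvalue b) * \<alpha> b + k (eigenvalue b) * \<beta> b)" for b
  have z: "z = (\<Sum>b\<in>B. mode b (\<alpha> b) (\<beta> b))"
    unfolding \<alpha>_def \<beta>_def by (rule mode_expansion)
  have "z \<bullet> (block_spectral f g g k *v z) = (\<Sum>b\<in>B. \<Sum>c\<in>B. mode c (\<alpha> c) (\<beta> c) \<bullet>
      mode b (f (eigenvalue b) * \<alpha> b + g (eigenvalue b) * \<beta> b) (g (eigenvalue b) * \<alpha> b + k (eigenvalue b) * \<beta> b))"
    by (subst (1 2) z) (simp add: matrix_vector_mult_sum block_spectral_mult_mode inner_sum_left inner_sum_right)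
  also have "\<dots> = (\<Sum>b\<in>B. q b)"
    using finite_basis by (intro sum.cong refl) (simp add: inner_mode q_def)
  finally have quad: "z \<bullet> (block_spectral f g g k *v z) = (\<Sum>b\<in>B. q b)" .
  have "0 \<le> q b" for b
    using pos[of "\<alpha> b" "\<beta> b" "eigenvalue b"] by (cases "(\<alpha> b, \<beta> b) = (0, 0)") (auto simp: q_def)
  moreover obtain b where "b \<in> B" "(\<alpha> b, \<beta> b) \<noteq> (0, 0)"
  proof (rule ccontr)
    assume "\<not> thesis"
    with that have "\<alpha> b = 0 \<and> \<beta> b = 0" if "b \<in> B" for b
      using \<open>b \<in> B\<close> by blast
    then have "z = 0" by (subst z) (simp add: mode_zero)
    with \<open>z \<noteq> 0\<close> show False ..
  qed
  ultimately show "0 < z \<bullet> (block_spectral f g g k *v z)"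
    unfolding quad using pos[of "\<alpha> b" "\<beta> b"] finite_basis
    by (intro sum_pos2[where i = b]) (auto simp: q_def)
qed

lemma mat_exp_block_spectral_mode_rotation:
  assumes "b \<in> B" and "f (eigenvalue b) = 0" "g (eigenvalue b) = 1" "h (eigenvalue b) = - 1" "k (eigenvalue b) = 0"
  shows "mat_exp (t *\<^sub>R block_spectral f g h k) *v mode b \<alpha> \<beta> =
    mode b (cos t * \<alpha> + sin t * \<beta>) (- sin t * \<alpha> + cos t * \<beta>)"
  using mat_exp_mult_vector_rotation[of "block_spectral f g h k" "mode b \<alpha> \<beta>" t]
  by (simp add: block_spectral_mult_mode[OF assms(1)] assms(2-) mode_add mode_scaleR mode_zero algebra_simps)

lemma mat_exp_block_spectral_mode_tendsto_zero:
  assumes b: "b \<in> B" and trace: "f (eigenvalue b) + k (eigenvalue b) < 0"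
    and det: "f (eigenvalue b) * k (eigenvalue b) - g (eigenvalue b) * h (eigenvalue b) = 1"
  shows "((\<lambda>t. mat_exp (t *\<^sub>R block_spectral f g h k) *v mode b \<alpha> \<beta>) \<longlongrightarrow> 0) at_top"
proof (rule mat_exp_mult_vector_tendsto_zero)
  let ?M = "block_spectral f g h k" and ?p = "- (f (eigenvalue b) + k (eigenvalue b))"
  show "?M *v (?M *v mode b \<alpha> \<beta>) + ?p *\<^sub>R (?M *v mode b \<alpha> \<beta>) + mode b \<alpha> \<beta> = 0"
    unfolding block_spectral_mult_mode[OF b] mode_scaleR mode_add mode_zero[of b, symmetric]
    by (intro arg_cong2[where f = "mode b"]) (use det in algebra)+
  show "?p > 0" using trace by simp
qed

lemma y_tilde_eq_kernel_modes:
  "y_tilde y0 t = (\<Sum>b\<in>{b\<in>B. eigenvalue b = 0}.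
    mode b (cos t * (b \<bullet> upper_half y0) + sin t * (b \<bullet> lower_half y0))
      (- sin t * (b \<bullet> upper_half y0) + cos t * (b \<bullet> lower_half y0)))"
proof -
  define B0 where "B0 = {b\<in>B. eigenvalue b = 0}"
  define x where "x = (\<Sum>b\<in>B0. (b \<bullet> upper_half y0) *\<^sub>R b)"
  define v where "v = (\<Sum>b\<in>B0. (b \<bullet> lower_half y0) *\<^sub>R b)"
  have "(\<Sum>b\<in>B0. mode b (cos t * (b \<bullet> upper_half y0) + sin t * (b \<bullet> lower_half y0))
      (- sin t * (b \<bullet> upper_half y0) + cos t * (b \<bullet> lower_half y0)))
      = stack (cos t *\<^sub>R x + sin t *\<^sub>R v) (- sin t *\<^sub>R x + cos t *\<^sub>R v)"
    by (simp add: x_def v_def mode_def stack_sum scaleR_add_left scaleR_diff_left sum.distrib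
        sum_subtractf sum_negf scaleR_sum_right)
  also have "\<dots> = y_tilde y0 t"
    unfolding x_def v_def B0_def kernel_projection
    by (simp add: vec_eq_iff y_tilde_def Let_def upper_half_def lower_half_def stack_def
        add_divide_distrib diff_divide_distrib split: sum.split)
  finally show ?thesis unfolding B0_def ..
qed

lemma mat_exp_block_spectral_asymptotics:
  assumes "f 0 = 0" "g 0 = 1" "h 0 = - 1" "k 0 = 0"
    and trace: "\<And>l. 0 < l \<Longrightarrow> f l + k l < 0" and det: "\<And>l. 0 < l \<Longrightarrow> f l * k l - g l * h l = 1"
  shows "((\<lambda>t. mat_exp (t *\<^sub>R block_spectral f g h k) *v y0 - y_tilde y0 t) \<longlongrightarrow> 0) at_top"
proof -
  let ?E = "\<lambda>t b. mat_exp (t *\<^sub>R block_spectral f g h k) *v mode b (b \<bullet> upper_half y0) (b \<bullet> lower_half y0)"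
  define B0 where "B0 = {b\<in>B. eigenvalue b = 0}"
  define B1 where "B1 = {b\<in>B. eigenvalue b \<noteq> 0}"
  have "mat_exp (t *\<^sub>R block_spectral f g h k) *v y0 - y_tilde y0 t = (\<Sum>b\<in>B1. ?E t b)" for t
  proof -
    have "mat_exp (t *\<^sub>R block_spectral f g h k) *v y0 =
        mat_exp (t *\<^sub>R block_spectral f g h k) *v (\<Sum>b\<in>B. mode b (b \<bullet> upper_half y0) (b \<bullet> lower_half y0))"
      by (rule arg_cong[OF mode_expansion])
    also have "\<dots> = (\<Sum>b\<in>B0. ?E t b) + (\<Sum>b\<in>B1. ?E t b)"
      using finite_basis unfolding matrix_vector_mult_sum
      by (subst sum.union_disjoint[symmetric]) (auto simp: B0_def B1_def intro: sum.cong)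
    also have "(\<Sum>b\<in>B0. ?E t b) = y_tilde y0 t"
      unfolding y_tilde_eq_kernel_modes B0_def
      using assms(1-4) by (intro sum.cong refl mat_exp_block_spectral_mode_rotation) auto
    finally show ?thesis by simp
  qed
  moreover have "((\<lambda>t. \<Sum>b\<in>B1. ?E t b) \<longlongrightarrow> 0) at_top"
  proof (intro tendsto_null_sum mat_exp_block_spectral_mode_tendsto_zero)
    fix b assume "b \<in> B1"
    then have "b \<in> B" "0 < eigenvalue b"
      using eigenvalue_nonneg[of b] by (auto simp: B1_def)
    then show "b \<in> B" "f (eigenvalue b) + k (eigenvalue b) < 0"
      "f (eigenvalue b) * k (eigenvalue b) - g (eigenvalue b) * h (eigenvalue b) = 1"
      using trace det by auto
  qed
  ultimately show ?thesis by simp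
qed

end

section \<open>Polar factor of G\<close>

definition sqrt_sq_plus_4 :: "real \<Rightarrow> real" where
  "sqrt_sq_plus_4 l = sqrt (l\<^sup>2 + 4)"

lemma sq_plus_4_pos: "0 < (l::real)\<^sup>2 + 4"
  by (simp add: add_nonneg_pos)

lemma self_mult_plus_4_neq_0: "(l::real) * l + 4 \<noteq> 0"
  using sq_plus_4_pos[of l] by (simp add: power2_eq_square)

lemma sqrt_sq_plus_4_pos: "0 < sqrt_sq_plus_4 l"
  using sq_plus_4_pos[of l] by (simp add: sqrt_sq_plus_4_def)

lemma sqrt_sq_plus_4_nonzero [simp]: "sqrt_sq_plus_4 l \<noteq> 0"
  using sqrt_sq_plus_4_pos[of l] by simp

lemma sqrt_sq_plus_4_zero: "sqrt_sq_plus_4 0 = 2"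
  by (simp add: sqrt_sq_plus_4_def real_sqrt_unique)

lemma divide_sqrt_sq_plus_4_mult:
  "a / sqrt_sq_plus_4 l * (b / sqrt_sq_plus_4 l) = a * b / (l\<^sup>2 + 4)"
  using sq_plus_4_pos[of l] by (simp add: sqrt_sq_plus_4_def flip: power2_eq_square)

context laplacian_eigenbasis
begin

lemma block_spectral_cong:
  assumes "\<And>l. f l = f' l" "\<And>l. g l = g' l" "\<And>l. h l = h' l" "\<And>l. k l = k' l"
  shows "block_spectral f g h k = block_spectral f' g' h' k'"
proof -
  from assms have "f = f'" "g = g'" "h = h'" "k = k'" by auto
  then show ?thesis by simp
qed

text \<open>At the eigenvalue l the block of G^T G is X = [[1, l], [l, 1 + l^2]], with determinant 1
  and trace l^2 + 2. By Cayley-Hamilton (X + I)^2 = (l^2 + 4) X, so its positive square root is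
  (X + I) / sqrt (l^2 + 4); having determinant 1, this block is inverted by its adjugate.\<close>

definition polar_P :: "real^('n + 'n)^('n + 'n)" where
  "polar_P = block_spectral (\<lambda>l. 2 / sqrt_sq_plus_4 l) (\<lambda>l. l / sqrt_sq_plus_4 l)
     (\<lambda>l. l / sqrt_sq_plus_4 l) (\<lambda>l. (2 + l\<^sup>2) / sqrt_sq_plus_4 l)"

lemma polar_P_squared: "polar_P ** polar_P = transpose (block_G (laplacian E)) ** block_G (laplacian E)"
  unfolding polar_P_def block_G_eq_block_spectral transpose_block_spectral block_spectral_mult
  by (intro block_spectral_cong;
      simp only: divide_sqrt_sq_plus_4_mult add_divide_distrib[symmetric];
      simp add: field_simps power2_eq_square self_mult_plus_4_neq_0)

lemma pos_def_polar_P: "pos_def_matrix polar_P"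
  unfolding polar_P_def
proof (rule pos_def_block_spectral)
  fix l \<alpha> \<beta> :: real assume "(\<alpha>, \<beta>) \<noteq> (0, 0)"
  then have "0 < \<alpha>\<^sup>2 + 2 * \<beta>\<^sup>2"
    by (cases "\<alpha> = 0") (simp_all add: add_pos_nonneg)
  then have "0 < (\<alpha> + l * \<beta>)\<^sup>2 + \<alpha>\<^sup>2 + 2 * \<beta>\<^sup>2"
    using zero_le_power2[of "\<alpha> + l * \<beta>"] by linarith
  then have "0 < ((\<alpha> + l * \<beta>)\<^sup>2 + \<alpha>\<^sup>2 + 2 * \<beta>\<^sup>2) / sqrt_sq_plus_4 l"
    using sqrt_sq_plus_4_pos by simp
  also have "\<dots> = \<alpha> * (2 / sqrt_sq_plus_4 l * \<alpha> + l / sqrt_sq_plus_4 l * \<beta>)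
      + \<beta> * (l / sqrt_sq_plus_4 l * \<alpha> + (2 + l\<^sup>2) / sqrt_sq_plus_4 l * \<beta>)"
    by (simp add: field_simps power2_eq_square)
  finally show "0 < \<alpha> * (2 / sqrt_sq_plus_4 l * \<alpha> + l / sqrt_sq_plus_4 l * \<beta>)
      + \<beta> * (l / sqrt_sq_plus_4 l * \<alpha> + (2 + l\<^sup>2) / sqrt_sq_plus_4 l * \<beta>)" .
qed

lemma matrix_inv_polar_P:
  "matrix_inv polar_P = block_spectral (\<lambda>l. (2 + l\<^sup>2) / sqrt_sq_plus_4 l) (\<lambda>l. - l / sqrt_sq_plus_4 l)
     (\<lambda>l. - l / sqrt_sq_plus_4 l) (\<lambda>l. 2 / sqrt_sq_plus_4 l)"
proof (rule matrix_inv_eqI)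
  show "polar_P ** block_spectral (\<lambda>l. (2 + l\<^sup>2) / sqrt_sq_plus_4 l) (\<lambda>l. - l / sqrt_sq_plus_4 l)
      (\<lambda>l. - l / sqrt_sq_plus_4 l) (\<lambda>l. 2 / sqrt_sq_plus_4 l) = mat 1"
    unfolding polar_P_def block_spectral_mult block_spectral_one[symmetric]
    by (intro block_spectral_cong;
        simp only: divide_sqrt_sq_plus_4_mult add_divide_distrib[symmetric];
        simp add: field_simps power2_eq_square self_mult_plus_4_neq_0)
qed

lemma polar_U_block_G:
  "polar_U (block_G (laplacian E)) =
    block_spectral (\<lambda>l. - l / sqrt_sq_plus_4 l) (\<lambda>l. 2 / sqrt_sq_plus_4 l)
      (\<lambda>l. - 2 / sqrt_sq_plus_4 l) (\<lambda>l. - l / sqrt_sq_plus_4 l)"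
proof -
  have "polar_U (block_G (laplacian E)) = block_G (laplacian E) ** matrix_inv polar_P"
    unfolding polar_U_def mat_sqrt_eqI[OF pos_def_polar_P polar_P_squared] ..
  also have "\<dots> = block_spectral (\<lambda>l. - l / sqrt_sq_plus_4 l) (\<lambda>l. 2 / sqrt_sq_plus_4 l)
     (\<lambda>l. - 2 / sqrt_sq_plus_4 l) (\<lambda>l. - l / sqrt_sq_plus_4 l)"
    unfolding matrix_inv_polar_P block_G_eq_block_spectral block_spectral_mult
    by (intro block_spectral_cong) (simp_all add: field_simps power2_eq_square)
  finally show ?thesis .
qed

lemma block_G_asymptotics:
  "((\<lambda>t. mat_exp (t *\<^sub>R block_G (laplacian E)) *v y0 - y_tilde y0 t) \<longlongrightarrow> 0) at_top"
  unfolding block_G_eq_block_spectral by (rule mat_exp_block_spectral_asymptotics) auto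

lemma polar_U_asymptotics:
  "((\<lambda>t. mat_exp (t *\<^sub>R polar_U (block_G (laplacian E))) *v y0 - y_tilde y0 t) \<longlongrightarrow> 0) at_top"
  unfolding polar_U_block_G
proof (rule mat_exp_block_spectral_asymptotics)
  fix l :: real
  show "0 < l \<Longrightarrow> - l / sqrt_sq_plus_4 l + - l / sqrt_sq_plus_4 l < 0"
    using sqrt_sq_plus_4_pos[of l] by (simp add: field_simps)
  show "- l / sqrt_sq_plus_4 l * (- l / sqrt_sq_plus_4 l) - 2 / sqrt_sq_plus_4 l * (- 2 / sqrt_sq_plus_4 l) = 1"
    by (simp only: divide_sqrt_sq_plus_4_mult diff_divide_distrib[symmetric])
      (simp add: field_simps power2_eq_square self_mult_plus_4_neq_0)
qed (simp_all add: sqrt_sq_plus_4_zero)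

end

theorem proposition2:
  fixes E :: "'n::finite \<Rightarrow> 'n \<Rightarrow> bool"
    and y0 :: "real^('n + 'n)"
  assumes "CARD('n) \<ge> 2"
    and "\<And>i j. E i j \<longleftrightarrow> E j i"
    and "\<And>i. \<not> E i i"
    and "\<And>i j. (i, j) \<in> {(a, b). E a b}\<^sup>*"
  shows "((\<lambda>t. mat_exp (t *\<^sub>R block_G (laplacian E)) *v y0 - y_tilde y0 t) \<longlongrightarrow> 0) at_top \<and>
         ((\<lambda>t. mat_exp (t *\<^sub>R polar_U (block_G (laplacian E))) *v y0 - y_tilde y0 t) \<longlongrightarrow> 0) at_top"
proof -
  interpret connected_graph E
    using assms(2,4) by unfold_locales
  obtain B where "orthonormal_eigenbasis (laplacian E) B"
    using symmetric_matrix_orthonormal_eigenbasis[OF transpose_laplacian] by blast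
  then interpret laplacian_eigenbasis E B
    by (rule laplacian_eigenbasis.intro[OF connected_graph_axioms])
  show ?thesis
    using block_G_asymptotics polar_U_asymptotics ..
qed

end
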